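(* Let $n$ be a positive integer and $v$ an odd positive integer, let $q=v^{1/n}$, assume $q\ge3$, and put $m=\left\lfloor\frac{q-1}{2}\right\rfloor$. Then there exists a $\left(q^n,\ m^nq^n,\ m^n(q^n-2^n),\ q^n\right)$ placement delivery array, which realizes a coded caching scheme with $K=q^n$ users, memory ratio $\frac{M}{N}=1-\left(\frac{2}{q}\right)^n$, subpacketization $m^nq^n$, and transmission load $R=m^{-n}$.
   Context: A $(K,F,Z,S)$ placement delivery array (PDA) is an $F\times K$ array $\mathbf{P}=(p_{j,k})$ with entries from $\{*\}\cup\{1,\dots,S\}$ such that: (C1) each column contains exactly $Z$ stars; (C2) each integer of $\{1,\dots,S\}$ occurs at least once; (C3) for any two distinct entries $p_{j_1,k_1}=p_{j_2,k_2}=s$ (an integer) we have $j_1\neq j_2$, $k_1\neq k_2$, and $p_{j_1,k_2}=p_{j_2,k_1}=*$. A $(K,M,N)$ coded caching system consists of a server storing $N$ equal-size files and $K$ users each with a cache of size $M$ files, connected by an error-free shared broadcast link. An $F$-division scheme splits each file into $F$ equal-size packets placed (uncoded) in caches independently of demands; in delivery each user requests one file and the server broadcasts XORs of packets so every user decodes its request. The load $R$ is the worst-case normalized broadcast size; $M/N$ is the memory ratio. A $(K,F,Z,S)$ PDA realizes an $F$-division scheme with $M/N=Z/F$ and $R=S/F$. *)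

theory Defs
  imports Complex_Main
begin

text \<open>A (K,F,Z,S) placement delivery array: an F x K array with rows j < F and
columns k < K. The entry P j k is None for a star and Some s for an integer s.\<close>

definition is_PDA :: "nat \<Rightarrow> nat \<Rightarrow> nat \<Rightarrow> nat \<Rightarrow> (nat \<Rightarrow> nat \<Rightarrow> nat option) \<Rightarrow> bool" where
  "is_PDA K F Z S P \<longleftrightarrow>
     (\<forall>j<F. \<forall>k<K. \<forall>s. P j k = Some s \<longrightarrow> 1 \<le> s \<and> s \<le> S) \<and>
     (\<forall>k<K. card {j. j < F \<and> P j k = None} = Z) \<and>
     (\<forall>s\<in>{1..S}. \<exists>j<F. \<exists>k<K. P j k = Some s) \<and>
     (\<forall>j1<F. \<forall>k1<K. \<forall>j2<F. \<forall>k2<K. \<forall>s.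
        P j1 k1 = Some s \<and> P j2 k2 = Some s \<and> (j1, k1) \<noteq> (j2, k2) \<longrightarrow>
        j1 \<noteq> j2 \<and> k1 \<noteq> k2 \<and> P j1 k2 = None \<and> P j2 k1 = None)"

end

theory Submission
  imports Defs "HOL-Library.FuncSet" "HOL-Number_Theory.Cong"
begin

text \<open>Write \<open>b = 2m + 1\<close> and \<open>e(r, \<sigma>) = \<Sum>\<^sub>i \<sigma>\<^sub>i r\<^sub>i b\<^sup>i\<close> for magnitudes
  \<open>r \<in> {1..m}\<^sup>n\<close> and signs \<open>\<sigma> \<in> {-1, 1}\<^sup>n\<close>. Since \<open>b\<^sup>n \<le> v\<close>, these balanced base-\<open>b\<close>
  expansions are pairwise distinct and of absolute value below \<open>v/2\<close>, hence distinct modulo \<open>v\<close>.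
  Index the rows by pairs \<open>(r, j)\<close> with \<open>j \<in> \<int>\<^sub>v\<close> and the columns by \<open>k \<in> \<int>\<^sub>v\<close>; the entry at
  \<open>((r, j), k)\<close> is the integer \<open>(2j - k) mod v\<close> (shifted into \<open>1..v\<close>) if
  \<open>k - j \<equiv> e(r, \<sigma>)\<close> for some \<open>\<sigma>\<close>, and a star otherwise. Each column then has exactly
  \<open>(2m)\<^sup>n\<close> integer entries. If \<open>((r\<^sub>1, j\<^sub>1), k\<^sub>1)\<close> and \<open>((r\<^sub>2, j\<^sub>2), k\<^sub>2)\<close> carry the same
  integer and \<open>((r\<^sub>1, j\<^sub>1), k\<^sub>2)\<close> were not a star, with signs \<open>\<tau>\<close>, then
  \<open>e(r\<^sub>1, \<sigma>\<^sub>1) + e(r\<^sub>1, \<tau>) \<equiv> 2 e(r\<^sub>2, \<sigma>\<^sub>2) (mod v)\<close>. As \<open>v\<close> is odd, the half of the left side,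
  which has a zero digit wherever \<open>\<sigma>\<^sub>1\<close> and \<open>\<tau>\<close> differ, equals \<open>e(r\<^sub>2, \<sigma>\<^sub>2)\<close>, all of whose
  digits are nonzero; so \<open>\<tau> = \<sigma>\<^sub>1\<close> and \<open>k\<^sub>1 = k\<^sub>2\<close>.\<close>

section \<open>Balanced digit expansions\<close>

definition digit_value :: "int \<Rightarrow> nat \<Rightarrow> (nat \<Rightarrow> int) \<Rightarrow> int" where
  "digit_value b n d = (\<Sum>i<n. d i * b ^ i)"

lemma digit_value_Suc: "digit_value b (Suc n) d = digit_value b n d + d n * b ^ n"
  by (simp add: digit_value_def)

lemma digit_value_diff:
  "digit_value b n (\<lambda>i. x i - y i) = digit_value b n x - digit_value b n y"
  by (simp add: digit_value_def left_diff_distrib sum_subtractf)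

lemma abs_digit_value_le:
  assumes "b \<ge> 1" and "\<forall>i<n. \<bar>d i\<bar> \<le> c"
  shows "(b - 1) * \<bar>digit_value b n d\<bar> \<le> c * (b ^ n - 1)"
  using assms(2)
proof (induction n)
  case 0
  then show ?case by (simp add: digit_value_def)
next
  case (Suc n)
  have "\<bar>d n * b ^ n\<bar> = \<bar>d n\<bar> * b ^ n"
    using assms(1) by (simp add: abs_mult)
  then have "\<bar>digit_value b (Suc n) d\<bar> \<le> \<bar>digit_value b n d\<bar> + \<bar>d n\<bar> * b ^ n"
    by (metis abs_triangle_ineq digit_value_Suc)
  then have "(b - 1) * \<bar>digit_value b (Suc n) d\<bar> \<le> (b - 1) * \<bar>digit_value b n d\<bar> + (b - 1) * (\<bar>d n\<bar> * b ^ n)"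
    using assms(1) by (metis distrib_left mult_left_mono diff_ge_0_iff_ge)
  also have "\<dots> \<le> c * (b ^ n - 1) + (b - 1) * (c * b ^ n)"
    using Suc assms(1) by (intro add_mono mult_left_mono mult_right_mono) auto
  also have "\<dots> = c * (b ^ Suc n - 1)"
    by (simp add: algebra_simps)
  finally show ?case .
qed

lemma digit_value_eq_0_imp:
  assumes "b \<ge> 2" and "\<forall>i<n. \<bar>d i\<bar> \<le> b - 1" and "digit_value b n d = 0"
  shows "\<forall>i<n. d i = 0"
  using assms(2,3)
proof (induction n)
  case 0
  then show ?case by simp
next
  case (Suc n)
  have pow_pos: "b ^ n > 0"
    using assms(1) by simp
  have "(b - 1) * \<bar>digit_value b n d\<bar> \<le> (b - 1) * (b ^ n - 1)"
    using abs_digit_value_le[of b n d "b - 1"] Suc.prems assms(1) by auto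
  then have "\<bar>digit_value b n d\<bar> < 1 * b ^ n"
    using assms(1) by simp
  moreover have "digit_value b n d = - (d n * b ^ n)"
    using Suc.prems(2) by (simp add: digit_value_Suc eq_neg_iff_add_eq_0)
  then have "\<bar>digit_value b n d\<bar> = \<bar>d n\<bar> * b ^ n"
    using pow_pos by (simp add: abs_mult)
  ultimately have "\<bar>d n\<bar> < 1"
    using pow_pos by (metis mult_right_less_imp_less less_imp_le)
  then have "d n = 0" by simp
  moreover have "\<forall>i<n. d i = 0"
  proof (rule Suc.IH)
    show "\<forall>i<n. \<bar>d i\<bar> \<le> b - 1"
      using Suc.prems(1) by simp
    show "digit_value b n d = 0"
      using Suc.prems(2) \<open>d n = 0\<close> by (simp add: digit_value_Suc)
  qed
  ultimately show ?case
    by (simp add: less_Suc_eq)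
qed

lemma balanced_digit_value_inj:
  fixes m :: int
  assumes "m \<ge> 1" and "\<forall>i<n. \<bar>x i\<bar> \<le> m" and "\<forall>i<n. \<bar>y i\<bar> \<le> m"
    and "digit_value (2 * m + 1) n x = digit_value (2 * m + 1) n y"
  shows "\<forall>i<n. x i = y i"
proof -
  have "\<forall>i<n. x i - y i = 0"
  proof (rule digit_value_eq_0_imp)
    show "\<forall>i<n. \<bar>x i - y i\<bar> \<le> 2 * m + 1 - 1"
    proof (intro allI impI)
      fix i assume "i < n"
      then have "\<bar>x i\<bar> \<le> m" and "\<bar>y i\<bar> \<le> m"
        using assms(2,3) by auto
      then show "\<bar>x i - y i\<bar> \<le> 2 * m + 1 - 1"
        by linarith
    qed
    show "digit_value (2 * m + 1) n (\<lambda>i. x i - y i) = 0"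
      using assms(4) by (simp add: digit_value_diff)
  qed (use assms(1) in simp)
  then show ?thesis by simp
qed

lemma abs_balanced_digit_value_le:
  fixes m :: int
  assumes "m \<ge> 1" and "\<forall>i<n. \<bar>x i\<bar> \<le> m"
  shows "2 * \<bar>digit_value (2 * m + 1) n x\<bar> \<le> (2 * m + 1) ^ n - 1"
proof -
  have "m * (2 * \<bar>digit_value (2 * m + 1) n x\<bar>) \<le> m * ((2 * m + 1) ^ n - 1)"
    using abs_digit_value_le[of "2 * m + 1" n x m] assms by (simp add: algebra_simps)
  then show ?thesis
    using assms(1) by simp
qed

lemma cong_small_imp_eq:
  fixes x y v :: int
  assumes "[x = y] (mod v)" and "2 * \<bar>x\<bar> < v" and "2 * \<bar>y\<bar> < v"
  shows "x = y"
proof (rule ccontr)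
  assume "x \<noteq> y"
  moreover have "v dvd x - y"
    using assms(1) by (simp add: cong_iff_dvd_diff)
  ultimately have "\<bar>v\<bar> \<le> \<bar>x - y\<bar>"
    by (simp add: dvd_imp_le_int)
  moreover have "\<bar>x - y\<bar> \<le> \<bar>x\<bar> + \<bar>y\<bar>"
    by (rule abs_triangle_ineq4)
  ultimately show False
    using assms(2,3) by linarith
qed

lemma cong_double_cancel:
  fixes x y v :: int
  assumes "odd v" and "[2 * x = 2 * y] (mod v)"
  shows "[x = y] (mod v)"
  using assms by (simp add: cong_mult_lcancel)

definition sign_vectors :: "nat \<Rightarrow> (nat \<Rightarrow> int) set" where
  "sign_vectors n = {..<n} \<rightarrow>\<^sub>E {-1, 1}"

definition magnitude_vectors :: "nat \<Rightarrow> nat \<Rightarrow> (nat \<Rightarrow> int) set" where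
  "magnitude_vectors n m = {..<n} \<rightarrow>\<^sub>E {1..int m}"

definition signed_value :: "nat \<Rightarrow> nat \<Rightarrow> (nat \<Rightarrow> int) \<Rightarrow> (nat \<Rightarrow> int) \<Rightarrow> int" where
  "signed_value n m r \<sigma> = digit_value (2 * int m + 1) n (\<lambda>i. \<sigma> i * r i)"

lemma card_sign_vectors: "card (sign_vectors n) = 2 ^ n"
  by (simp add: sign_vectors_def card_PiE numeral_2_eq_2)

lemma card_magnitude_vectors: "card (magnitude_vectors n m) = m ^ n"
  by (simp add: magnitude_vectors_def card_PiE)

lemma finite_magnitude_vectors: "finite (magnitude_vectors n m)"
  by (simp add: magnitude_vectors_def finite_PiE)

lemma sign_vectors_cases:
  assumes "\<sigma> \<in> sign_vectors n" and "i < n"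
  shows "\<sigma> i = 1 \<or> \<sigma> i = -1"
  using assms by (auto simp: sign_vectors_def PiE_iff)

lemma magnitude_vectors_bounds:
  assumes "r \<in> magnitude_vectors n m" and "i < n"
  shows "1 \<le> r i" and "r i \<le> int m"
  using assms by (auto simp: magnitude_vectors_def PiE_iff)

lemma abs_signed_digit:
  assumes "r \<in> magnitude_vectors n m" and "\<sigma> \<in> sign_vectors n" and "i < n"
  shows "\<bar>\<sigma> i * r i\<bar> = r i"
  using sign_vectors_cases[OF assms(2,3)] magnitude_vectors_bounds[OF assms(1,3)] by auto

lemma abs_signed_digits_le:
  assumes "r \<in> magnitude_vectors n m" and "\<sigma> \<in> sign_vectors n"
  shows "\<forall>i<n. \<bar>\<sigma> i * r i\<bar> \<le> int m"
  using abs_signed_digit[OF assms] magnitude_vectors_bounds(2)[OF assms(1)] by simp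

lemma abs_signed_value_le:
  assumes "m \<ge> 1" and "r \<in> magnitude_vectors n m" and "\<sigma> \<in> sign_vectors n"
  shows "2 * \<bar>signed_value n m r \<sigma>\<bar> \<le> (2 * int m + 1) ^ n - 1"
  unfolding signed_value_def
  by (rule abs_balanced_digit_value_le) (use assms(1) abs_signed_digits_le[OF assms(2,3)] in simp_all)

lemma signed_value_inj:
  assumes "m \<ge> 1"
    and "r \<in> magnitude_vectors n m" "\<sigma> \<in> sign_vectors n"
    and "r' \<in> magnitude_vectors n m" "\<sigma>' \<in> sign_vectors n"
    and "signed_value n m r \<sigma> = signed_value n m r' \<sigma>'"
  shows "r = r' \<and> \<sigma> = \<sigma>'"
proof -
  have "\<forall>i<n. \<sigma> i * r i = \<sigma>' i * r' i"
    using assms(1,6) abs_signed_digits_le[OF assms(2,3)] abs_signed_digits_le[OF assms(4,5)]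
    by (intro balanced_digit_value_inj[of "int m"]) (simp_all add: signed_value_def)
  then have digits: "\<sigma> i * r i = \<sigma>' i * r' i" if "i < n" for i
    using that by blast
  have r_eq: "r i = r' i" if "i < n" for i
    using digits[OF that] abs_signed_digit[OF assms(2,3) that] abs_signed_digit[OF assms(4,5) that]
    by metis
  moreover have "\<sigma> i = \<sigma>' i" if "i < n" for i
    using digits[OF that] r_eq[OF that] magnitude_vectors_bounds(1)[OF assms(2) that] by simp
  ultimately show ?thesis
    using assms(2-5) unfolding magnitude_vectors_def sign_vectors_def by (auto intro: PiE_ext)
qed

lemma signed_value_add:
  assumes "\<sigma> \<in> sign_vectors n" and "\<tau> \<in> sign_vectors n"
  shows "signed_value n m r \<sigma> + signed_value n m r \<tau>
    = 2 * digit_value (2 * int m + 1) n (\<lambda>i. if \<sigma> i = \<tau> i then \<sigma> i * r i else 0)"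
proof -
  have "\<sigma> i * r i * b ^ i + \<tau> i * r i * b ^ i = 2 * ((if \<sigma> i = \<tau> i then \<sigma> i * r i else 0) * b ^ i)"
    if "i \<in> {..<n}" for i and b :: int
    using sign_vectors_cases[OF assms(1)] sign_vectors_cases[OF assms(2)] that by fastforce
  then show ?thesis
    unfolding signed_value_def digit_value_def sum.distrib[symmetric] sum_distrib_left
    by (intro sum.cong) simp_all
qed

lemma signed_value_midpoint_cong_imp_eq:
  assumes "m \<ge> 1" and "odd v" and "(2 * int m + 1) ^ n \<le> v"
    and "r \<in> magnitude_vectors n m" "\<sigma> \<in> sign_vectors n" "\<tau> \<in> sign_vectors n"
    and "r' \<in> magnitude_vectors n m" "\<sigma>' \<in> sign_vectors n"
    and "[signed_value n m r \<sigma> + signed_value n m r \<tau> = 2 * signed_value n m r' \<sigma>'] (mod v)"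
  shows "\<sigma> = \<tau>"
proof -
  define w where "w = (\<lambda>i. if \<sigma> i = \<tau> i then \<sigma> i * r i else 0)"
  have w_le: "\<forall>i<n. \<bar>w i\<bar> \<le> int m"
    using abs_signed_digits_le[OF assms(4,5)] unfolding w_def by (metis abs_zero of_nat_0_le_iff)
  have "[2 * digit_value (2 * int m + 1) n w = 2 * signed_value n m r' \<sigma>'] (mod v)"
    using assms(9) unfolding w_def signed_value_add[OF assms(5,6)] .
  then have "[digit_value (2 * int m + 1) n w = signed_value n m r' \<sigma>'] (mod v)"
    by (rule cong_double_cancel[OF assms(2)])
  moreover have "2 * \<bar>digit_value (2 * int m + 1) n w\<bar> < v"
    using abs_balanced_digit_value_le[of "int m" n w] assms(1,3) w_le by simp
  moreover have "2 * \<bar>signed_value n m r' \<sigma>'\<bar> < v"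
    using abs_signed_value_le[OF assms(1,7,8)] assms(3) by simp
  ultimately have "digit_value (2 * int m + 1) n w = digit_value (2 * int m + 1) n (\<lambda>i. \<sigma>' i * r' i)"
    unfolding signed_value_def by (rule cong_small_imp_eq)
  then have "\<forall>i<n. w i = \<sigma>' i * r' i"
    using assms(1) w_le abs_signed_digits_le[OF assms(7,8)]
    by (intro balanced_digit_value_inj[of "int m"]) simp_all
  then have "\<sigma> i = \<tau> i" if "i < n" for i
    using that abs_signed_digit[OF assms(7,8) that] magnitude_vectors_bounds(1)[OF assms(7) that]
    by (auto simp: w_def split: if_splits)
  then show ?thesis
    using assms(5,6) unfolding sign_vectors_def by (auto intro: PiE_ext)
qed

section \<open>Placement delivery arrays with arbitrary row indices\<close>

definition is_PDA_on :: "'a set \<Rightarrow> nat \<Rightarrow> nat \<Rightarrow> nat \<Rightarrow> ('a \<Rightarrow> nat \<Rightarrow> nat option) \<Rightarrow> bool" where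
  "is_PDA_on Rows K Z S Q \<longleftrightarrow>
     (\<forall>x\<in>Rows. \<forall>k<K. \<forall>s. Q x k = Some s \<longrightarrow> 1 \<le> s \<and> s \<le> S) \<and>
     (\<forall>k<K. card {x\<in>Rows. Q x k = None} = Z) \<and>
     (\<forall>s\<in>{1..S}. \<exists>x\<in>Rows. \<exists>k<K. Q x k = Some s) \<and>
     (\<forall>x1\<in>Rows. \<forall>k1<K. \<forall>x2\<in>Rows. \<forall>k2<K. \<forall>s.
        Q x1 k1 = Some s \<and> Q x2 k2 = Some s \<and> (x1, k1) \<noteq> (x2, k2) \<longrightarrow>
        x1 \<noteq> x2 \<and> k1 \<noteq> k2 \<and> Q x1 k2 = None \<and> Q x2 k1 = None)"

lemma is_PDA_reindex:
  assumes "bij_betw h {..<F} Rows" and "is_PDA_on Rows K Z S Q"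
  shows "is_PDA K F Z S (\<lambda>j. Q (h j))"
proof -
  note PDA = assms(2)[unfolded is_PDA_on_def]
  have h_Rows: "h j \<in> Rows" if "j < F" for j
    using assms(1) that by (auto dest: bij_betwE)
  have h_inj: "inj_on h {..<F}"
    using assms(1) by (rule bij_betw_imp_inj_on)
  have h_surj: "\<exists>j<F. h j = x" if "x \<in> Rows" for x
    using bij_betw_imp_surj_on[OF assms(1)] that by force
  have stars: "h ` {j. j < F \<and> Q (h j) k = None} = {x\<in>Rows. Q x k = None}" for k
  proof
    show "h ` {j. j < F \<and> Q (h j) k = None} \<subseteq> {x\<in>Rows. Q x k = None}"
      using h_Rows by auto
    show "{x\<in>Rows. Q x k = None} \<subseteq> h ` {j. j < F \<and> Q (h j) k = None}"
    proof
      fix x assume x: "x \<in> {x\<in>Rows. Q x k = None}"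
      then obtain j where "j < F" and "h j = x"
        using h_surj by blast
      with x show "x \<in> h ` {j. j < F \<and> Q (h j) k = None}"
        by auto
    qed
  qed
  show ?thesis
    unfolding is_PDA_def
  proof (intro conjI; intro allI impI ballI)
    fix j k s
    assume "j < F" and "k < K" and "Q (h j) k = Some s"
    then show "1 \<le> s \<and> s \<le> S"
      using PDA h_Rows by blast
  next
    fix k
    assume "k < K"
    have "inj_on h {j. j < F \<and> Q (h j) k = None}"
      using h_inj by (rule inj_on_subset) auto
    then have "card {x\<in>Rows. Q x k = None} = card {j. j < F \<and> Q (h j) k = None}"
      unfolding stars[symmetric] by (rule card_image)
    then show "card {j. j < F \<and> Q (h j) k = None} = Z"
      using PDA \<open>k < K\<close> by simp
  next
    fix s
    assume "s \<in> {1..S}"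
    then obtain x k where "x \<in> Rows" and "k < K" and "Q x k = Some s"
      using PDA by blast
    then show "\<exists>j<F. \<exists>k<K. Q (h j) k = Some s"
      using h_surj by blast
  next
    fix j1 k1 j2 k2 s
    assume j: "j1 < F" "j2 < F" and k: "k1 < K" "k2 < K"
      and same: "Q (h j1) k1 = Some s \<and> Q (h j2) k2 = Some s \<and> (j1, k1) \<noteq> (j2, k2)"
    then have "(h j1, k1) \<noteq> (h j2, k2)"
      using inj_onD[OF h_inj] by auto
    then have "h j1 \<noteq> h j2 \<and> k1 \<noteq> k2 \<and> Q (h j1) k2 = None \<and> Q (h j2) k1 = None"
      using PDA h_Rows[OF j(1)] h_Rows[OF j(2)] k same by blast
    then show "j1 \<noteq> j2 \<and> k1 \<noteq> k2 \<and> Q (h j1) k2 = None \<and> Q (h j2) k1 = None"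
      by auto
  qed
qed

lemma is_PDA_on_imp_ex_is_PDA:
  assumes "finite Rows" and "is_PDA_on Rows K Z S Q"
  shows "\<exists>P. is_PDA K (card Rows) Z S P"
proof -
  obtain h where "bij_betw h {..<card Rows} Rows"
    using ex_bij_betw_nat_finite[OF assms(1)] by (auto simp: atLeast0LessThan)
  then show ?thesis
    using is_PDA_reindex assms(2) by blast
qed

locale signed_digit_pda =
  fixes n m v :: nat
  assumes m_pos: "m \<ge> 1"
    and odd_v: "odd v"
    and base_power_le: "(2 * m + 1) ^ n \<le> v"
begin

definition rows :: "((nat \<Rightarrow> int) \<times> nat) set" where
  "rows = magnitude_vectors n m \<times> {..<v}"

definition entry :: "(nat \<Rightarrow> int) \<times> nat \<Rightarrow> nat \<Rightarrow> nat option" where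
  "entry x k = (case x of (r, j) \<Rightarrow>
     if \<exists>\<sigma>\<in>sign_vectors n. [int k - int j = signed_value n m r \<sigma>] (mod int v)
     then Some (nat ((2 * int j - int k) mod int v) + 1) else None)"

lemma v_pos: "v > 0"
  using odd_v by (cases v) auto

lemma finite_rows: "finite rows"
  by (simp add: rows_def finite_magnitude_vectors)

lemma card_rows: "card rows = m ^ n * v"
  by (simp add: rows_def card_cartesian_product card_magnitude_vectors)

lemma base_power_le_int: "(2 * int m + 1) ^ n \<le> int v"
proof -
  have "int ((2 * m + 1) ^ n) \<le> int v"
    using base_power_le by (rule of_nat_mono)
  then show ?thesis
    by (simp add: add.commute)
qed

lemma small_signed_value:
  assumes "r \<in> magnitude_vectors n m" and "\<sigma> \<in> sign_vectors n"
  shows "2 * \<bar>signed_value n m r \<sigma>\<bar> < int v"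
  using abs_signed_value_le[OF m_pos assms] base_power_le_int by linarith

lemma odd_int_v: "odd (int v)"
  using odd_v by simp

lemma cong_less_imp_eq:
  assumes "[int a = int b] (mod int v)" and "a < v" and "b < v"
  shows "a = b"
  using assms by (simp add: cong_int_iff cong_less_modulus_unique_nat)

lemma entry_SomeE:
  assumes "entry (r, j) k = Some s"
  obtains \<sigma> where "\<sigma> \<in> sign_vectors n" and "[int k - int j = signed_value n m r \<sigma>] (mod int v)"
    and "s = nat ((2 * int j - int k) mod int v) + 1"
  using assms that unfolding entry_def by (auto split: if_splits)

lemma nat_mod_less: "nat (a mod int v) < v"
  using v_pos by (simp add: nat_less_iff)

lemma entry_range:
  assumes "entry (r, j) k = Some s"
  shows "1 \<le> s \<and> s \<le> v"
  using assms nat_mod_less by (auto elim!: entry_SomeE simp: Suc_le_eq)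

lemma entry_value_cong:
  assumes "entry (r1, j1) k1 = Some s" and "entry (r2, j2) k2 = Some s"
  shows "[2 * int j1 - int k1 = 2 * int j2 - int k2] (mod int v)"
proof -
  have "nat ((2 * int j1 - int k1) mod int v) = nat ((2 * int j2 - int k2) mod int v)"
    using assms by (auto elim!: entry_SomeE)
  then show ?thesis
    using v_pos by (simp add: cong_def eq_nat_nat_iff)
qed

lemma entry_same_row:
  assumes "k1 < v" and "k2 < v" and "entry x k1 = Some s" and "entry x k2 = Some s"
  shows "k1 = k2"
proof -
  obtain r j where x: "x = (r, j)" by (cases x)
  have "[2 * int j - int k1 = 2 * int j - int k2] (mod int v)"
    using entry_value_cong assms(3,4) unfolding x .
  then have "[int k1 = int k2] (mod int v)"
    by (simp add: cong_iff_dvd_diff dvd_diff_commute)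
  then show ?thesis
    using assms(1,2) by (rule cong_less_imp_eq)
qed

lemma entry_same_column:
  assumes "r1 \<in> magnitude_vectors n m" "r2 \<in> magnitude_vectors n m" and "j1 < v" "j2 < v"
    and "entry (r1, j1) k = Some s" and "entry (r2, j2) k = Some s"
  shows "(r1, j1) = (r2, j2)"
proof -
  have "[2 * int j1 = 2 * int j2] (mod int v)"
    using entry_value_cong[OF assms(5,6)] by (simp add: cong_iff_dvd_diff)
  then have "j1 = j2"
    using cong_double_cancel[OF odd_int_v] cong_less_imp_eq assms(3,4) by blast
  obtain \<sigma>1 \<sigma>2 where \<sigma>1: "\<sigma>1 \<in> sign_vectors n" "[int k - int j1 = signed_value n m r1 \<sigma>1] (mod int v)"
    and \<sigma>2: "\<sigma>2 \<in> sign_vectors n" "[int k - int j2 = signed_value n m r2 \<sigma>2] (mod int v)"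
    using assms(5,6) by (auto elim!: entry_SomeE)
  have "[signed_value n m r1 \<sigma>1 = signed_value n m r2 \<sigma>2] (mod int v)"
    using cong_trans[OF cong_sym[OF \<sigma>1(2)]] \<sigma>2(2) \<open>j1 = j2\<close> by simp
  then have "signed_value n m r1 \<sigma>1 = signed_value n m r2 \<sigma>2"
    using cong_small_imp_eq small_signed_value assms(1,2) \<sigma>1(1) \<sigma>2(1) by blast
  then have "r1 = r2"
    using signed_value_inj m_pos assms(1,2) \<sigma>1(1) \<sigma>2(1) by blast
  with \<open>j1 = j2\<close> show ?thesis by simp
qed

lemma entry_cross:
  assumes "r1 \<in> magnitude_vectors n m" "r2 \<in> magnitude_vectors n m" and "k1 < v" "k2 < v"
    and "entry (r1, j1) k1 = Some s" and "entry (r2, j2) k2 = Some s"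
    and "entry (r1, j1) k2 \<noteq> None"
  shows "k1 = k2"
proof -
  obtain \<sigma>1 \<sigma>2 where \<sigma>1: "\<sigma>1 \<in> sign_vectors n" "[int k1 - int j1 = signed_value n m r1 \<sigma>1] (mod int v)"
    and \<sigma>2: "\<sigma>2 \<in> sign_vectors n" "[int k2 - int j2 = signed_value n m r2 \<sigma>2] (mod int v)"
    using assms(5,6) by (auto elim!: entry_SomeE)
  obtain \<tau> where \<tau>: "\<tau> \<in> sign_vectors n" "[int k2 - int j1 = signed_value n m r1 \<tau>] (mod int v)"
    using assms(7) by (auto elim!: entry_SomeE)
  have "[signed_value n m r1 \<sigma>1 + signed_value n m r1 \<tau> = 2 * signed_value n m r2 \<sigma>2] (mod int v)"
  proof -
    have "[signed_value n m r1 \<sigma>1 + signed_value n m r1 \<tau> = (int k1 - int j1) + (int k2 - int j1)] (mod int v)"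
      using cong_sym[OF cong_add[OF \<sigma>1(2) \<tau>(2)]] .
    also have "(int k1 - int j1) + (int k2 - int j1)
      = 2 * (int k2 - int j2) - ((2 * int j1 - int k1) - (2 * int j2 - int k2))"
      by (simp add: algebra_simps)
    also have "[2 * (int k2 - int j2) - ((2 * int j1 - int k1) - (2 * int j2 - int k2))
      = 2 * (int k2 - int j2) - 0] (mod int v)"
      using entry_value_cong[OF assms(5,6)] by (intro cong_diff cong_refl) (simp add: cong_diff_iff_cong_0)
    also have "[2 * (int k2 - int j2) - 0 = 2 * signed_value n m r2 \<sigma>2] (mod int v)"
      using cong_scalar_left[OF \<sigma>2(2), of 2] by simp
    finally show ?thesis .
  qed
  then have "\<sigma>1 = \<tau>"
    using signed_value_midpoint_cong_imp_eq[OF m_pos _ base_power_le_int assms(1) \<sigma>1(1) \<tau>(1) assms(2) \<sigma>2(1)]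
      odd_v by simp
  have "[int k1 - int j1 = int k2 - int j1] (mod int v)"
    using cong_trans[OF \<sigma>1(2)[unfolded \<open>\<sigma>1 = \<tau>\<close>] cong_sym[OF \<tau>(2)]] .
  then have "[int k1 = int k2] (mod int v)"
    by (simp add: cong_iff_dvd_diff)
  then show ?thesis
    using assms(3,4) by (rule cong_less_imp_eq)
qed

lemma entry_ne_None_iff:
  assumes "j < v"
  shows "entry (r, j) k \<noteq> None
    \<longleftrightarrow> (\<exists>\<sigma>\<in>sign_vectors n. j = nat ((int k - signed_value n m r \<sigma>) mod int v))"
proof -
  have "[int k - int j = e] (mod int v) \<longleftrightarrow> j = nat ((int k - e) mod int v)" for e
  proof -
    have "[int k - int j = e] (mod int v) \<longleftrightarrow> [int j = int k - e] (mod int v)"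
    proof -
      have "int j - (int k - e) = - ((int k - int j) - e)"
        by simp
      then show ?thesis
        by (simp only: cong_iff_dvd_diff dvd_minus_iff)
    qed
    also have "\<dots> \<longleftrightarrow> int j = (int k - e) mod int v"
      using assms by (simp add: cong_def)
    also have "\<dots> \<longleftrightarrow> j = nat ((int k - e) mod int v)"
      using v_pos by auto
    finally show ?thesis .
  qed
  then show ?thesis
    unfolding entry_def by simp
qed

lemma card_column_stars:
  assumes "k < v"
  shows "card {x\<in>rows. entry x k = None} = m ^ n * (v - 2 ^ n)"
proof -
  define g where "g = (\<lambda>(r, \<sigma>). (r, nat ((int k - signed_value n m r \<sigma>) mod int v)))"
  have integers: "{x\<in>rows. entry x k \<noteq> None} = g ` (magnitude_vectors n m \<times> sign_vectors n)"
  proof (intro equalityI subsetI)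
    fix x
    assume "x \<in> {x\<in>rows. entry x k \<noteq> None}"
    then obtain r j where x: "x = (r, j)" and r: "r \<in> magnitude_vectors n m"
      and "j < v" and "entry (r, j) k \<noteq> None"
      unfolding rows_def by auto
    then obtain \<sigma> where "\<sigma> \<in> sign_vectors n" and "j = nat ((int k - signed_value n m r \<sigma>) mod int v)"
      using entry_ne_None_iff by blast
    then show "x \<in> g ` (magnitude_vectors n m \<times> sign_vectors n)"
      using x r by (auto simp: g_def intro!: rev_image_eqI[of "(r, \<sigma>)"])
  next
    fix x
    assume "x \<in> g ` (magnitude_vectors n m \<times> sign_vectors n)"
    then obtain r \<sigma> where r: "r \<in> magnitude_vectors n m" and "\<sigma> \<in> sign_vectors n"
      and x: "x = (r, nat ((int k - signed_value n m r \<sigma>) mod int v))"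
      unfolding g_def by auto
    then show "x \<in> {x\<in>rows. entry x k \<noteq> None}"
      using entry_ne_None_iff[OF nat_mod_less] nat_mod_less unfolding rows_def by auto
  qed
  have "inj_on g (magnitude_vectors n m \<times> sign_vectors n)"
  proof (rule inj_onI, clarify)
    fix r \<sigma> r' \<sigma>'
    assume r\<sigma>: "r \<in> magnitude_vectors n m" "\<sigma> \<in> sign_vectors n"
      "r' \<in> magnitude_vectors n m" "\<sigma>' \<in> sign_vectors n" and "g (r, \<sigma>) = g (r', \<sigma>')"
    then have "r = r'" and "[int k - signed_value n m r \<sigma> = int k - signed_value n m r' \<sigma>'] (mod int v)"
      using v_pos by (auto simp: g_def cong_def eq_nat_nat_iff)
    then have "[signed_value n m r \<sigma> = signed_value n m r' \<sigma>'] (mod int v)"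
      by (simp add: cong_iff_dvd_diff dvd_diff_commute)
    then have "signed_value n m r \<sigma> = signed_value n m r' \<sigma>'"
      using small_signed_value r\<sigma> by (blast intro: cong_small_imp_eq)
    then show "r = r' \<and> \<sigma> = \<sigma>'"
      using signed_value_inj m_pos r\<sigma> by blast
  qed
  then have "card {x\<in>rows. entry x k \<noteq> None} = m ^ n * 2 ^ n"
    unfolding integers by (simp add: card_image card_cartesian_product card_magnitude_vectors card_sign_vectors)
  moreover have "{x\<in>rows. entry x k = None} = rows - {x\<in>rows. entry x k \<noteq> None}"
    by auto
  moreover have "finite {x\<in>rows. entry x k \<noteq> None}"
    using finite_rows by simp
  ultimately show ?thesis
    by (simp add: card_Diff_subset card_rows diff_mult_distrib2)
qed

lemma entry_surj:
  assumes "s \<in> {1..v}"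
  shows "\<exists>x\<in>rows. \<exists>k<v. entry x k = Some s"
proof -
  obtain r where r: "r \<in> magnitude_vectors n m"
    using card_magnitude_vectors[of n m] m_pos by (metis card.empty ex_in_conv power_eq_0_iff not_one_le_zero)
  obtain \<sigma> where \<sigma>: "\<sigma> \<in> sign_vectors n"
    using card_sign_vectors[of n] by (metis card.empty ex_in_conv power_eq_0_iff zero_neq_numeral)
  define e where "e = signed_value n m r \<sigma>"
  define j where "j = nat ((int s - 1 + e) mod int v)"
  define k where "k = nat ((int s - 1 + 2 * e) mod int v)"
  have j: "j < v" and j_cong: "[int j = int s - 1 + e] (mod int v)"
    using v_pos nat_mod_less by (simp_all add: j_def)
  have k: "k < v" and k_cong: "[int k = int s - 1 + 2 * e] (mod int v)"
    using v_pos nat_mod_less by (simp_all add: k_def)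
  have "[int k - int j = e] (mod int v)"
    using cong_diff[OF k_cong j_cong] by simp
  moreover have "[2 * int j - int k = int s - 1] (mod int v)"
    using cong_diff[OF cong_scalar_left[OF j_cong, of 2] k_cong] by (simp add: algebra_simps)
  with assms have "nat ((2 * int j - int k) mod int v) + 1 = s"
    by (simp add: cong_def Suc_nat_eq_nat_zadd1)
  ultimately have "entry (r, j) k = Some s"
    using \<sigma> unfolding entry_def e_def by auto
  then show ?thesis
    using r j k unfolding rows_def by blast
qed

lemma is_PDA_on_entry: "is_PDA_on rows v (m ^ n * (v - 2 ^ n)) v entry"
  unfolding is_PDA_on_def
proof (intro conjI; intro allI impI ballI)
  show "1 \<le> s \<and> s \<le> v" if "entry x k = Some s" for x k s
    using entry_range[of "fst x" "snd x"] that by simp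
  show "card {x\<in>rows. entry x k = None} = m ^ n * (v - 2 ^ n)" if "k < v" for k
    using card_column_stars that .
  show "\<exists>x\<in>rows. \<exists>k<v. entry x k = Some s" if "s \<in> {1..v}" for s
    using entry_surj that .
next
  fix x1 x2 k1 k2 s
  assume x: "x1 \<in> rows" "x2 \<in> rows" and k: "k1 < v" "k2 < v"
    and same: "entry x1 k1 = Some s \<and> entry x2 k2 = Some s \<and> (x1, k1) \<noteq> (x2, k2)"
  obtain r1 j1 r2 j2 where x1: "x1 = (r1, j1)" and x2: "x2 = (r2, j2)"
    by (cases x1, cases x2)
  have r: "r1 \<in> magnitude_vectors n m" "r2 \<in> magnitude_vectors n m" and j: "j1 < v" "j2 < v"
    using x unfolding rows_def x1 x2 by auto
  have "k1 \<noteq> k2"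
  proof
    assume "k1 = k2"
    then have "x1 = x2"
      using entry_same_column[OF r j] same unfolding x1 x2 by auto
    with \<open>k1 = k2\<close> same show False
      by simp
  qed
  moreover have "x1 \<noteq> x2"
    using entry_same_row[OF k] same \<open>k1 \<noteq> k2\<close> by blast
  moreover have "entry x1 k2 = None"
    using entry_cross[OF r k] same \<open>k1 \<noteq> k2\<close> unfolding x1 x2 by blast
  moreover have "entry x2 k1 = None"
    using entry_cross[OF r(2,1) k(2,1)] same \<open>k1 \<noteq> k2\<close> unfolding x1 x2 by blast
  ultimately show "x1 \<noteq> x2 \<and> k1 \<noteq> k2 \<and> entry x1 k2 = None \<and> entry x2 k1 = None"
    by simp
qed

lemma ex_is_PDA: "\<exists>P. is_PDA v (m ^ n * v) (m ^ n * (v - 2 ^ n)) v P"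
  using is_PDA_on_imp_ex_is_PDA[OF finite_rows is_PDA_on_entry] unfolding card_rows .

end

lemma floor_half_bounds:
  fixes q :: real
  assumes "q \<ge> 3" and "m = nat \<lfloor>(q - 1) / 2\<rfloor>"
  shows "m \<ge> 1" and "2 * real m + 1 \<le> q"
proof -
  have floor_ge: "\<lfloor>(q - 1) / 2\<rfloor> \<ge> 1"
    using assms(1) by (simp add: le_floor_iff)
  then show "m \<ge> 1"
    using assms(2) by (simp add: le_nat_iff)
  show "2 * real m + 1 \<le> q"
    using floor_ge assms(2) of_int_floor_le[of "(q - 1) / 2"] by simp
qed

theorem corollary1:
  fixes n v m :: nat and q :: real
  assumes "n > 0" and "v > 0" and "odd v"
    and "q = root n (real v)" and "q \<ge> 3"
    and "m = nat \<lfloor>(q - 1) / 2\<rfloor>"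
  shows "\<exists>P. is_PDA v (m ^ n * v) (m ^ n * (v - 2 ^ n)) v P
           \<and> real (m ^ n * (v - 2 ^ n)) / real (m ^ n * v) = 1 - (2 / q) ^ n
           \<and> real v / real (m ^ n * v) = 1 / real m ^ n"
proof -
  have q_pow: "q ^ n = real v"
    using assms(1,4) by (simp add: real_root_pow_pos2)
  note m_pos = floor_half_bounds(1)[OF assms(5,6)]
  have "real ((2 * m + 1) ^ n) = (2 * real m + 1) ^ n"
    by (simp add: add.commute)
  also have "\<dots> \<le> q ^ n"
    using power_mono[OF floor_half_bounds(2)[OF assms(5,6)], of n] by simp
  finally have base_power_le: "(2 * m + 1) ^ n \<le> v"
    unfolding q_pow by (simp only: of_nat_le_iff)
  interpret signed_digit_pda n m v
    using m_pos assms(3) base_power_le by unfold_locales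
  have "2 ^ n \<le> v"
    using power_mono[of 2 "2 * m + 1" n] m_pos base_power_le by linarith
  then have "real (m ^ n * (v - 2 ^ n)) / real (m ^ n * v) = 1 - 2 ^ n / real v"
    using m_pos assms(2) by (simp add: of_nat_diff field_simps)
  also have "\<dots> = 1 - (2 / q) ^ n"
    by (simp add: power_divide q_pow)
  finally show ?thesis
    using ex_is_PDA m_pos assms(2) by simp
qed

end
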